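(* Let $L\ge1$ be an integer, $\gamma\in(0,1)$, $r\in[0,\frac{L}{L+1})$ and $n\in\mathbb{N}$ with $rn\in\mathbb{N}$. There exists $q(n,r,L,\gamma)$ such that for every $q\ge q(n,r,L,\gamma)$ the following holds: if $\epsilon\ge0$ is an integer with $(L-1)(\epsilon+1)\le\lfloor rn/L\rfloor$ and $C\subseteq[q]^n$ is an $(r,L)$ list-decodable code with $|C|=q^{\,n-\lfloor\frac{L+1}{L}rn\rfloor-\epsilon}$, then $C$ contains a subcode $C'\subseteq C$ with $|C'|\ge\gamma|C|$ and minimum distance at least $\lfloor\frac{L+1}{L}rn\rfloor-(L-1)(\epsilon+1)+1$.
   Context: $[q]=\{1,\dots,q\}$; a code is a subset of $[q]^n$, its minimum distance is the minimum Hamming distance (number of differing coordinates) between distinct codewords. $C$ is $(r,L)$ list-decodable if every Hamming ball of radius $rn$ in $[q]^n$ contains at most $L$ codewords. *)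

theory Defs
  imports Complex_Main
begin

definition words :: "nat \<Rightarrow> nat \<Rightarrow> nat list set" where
  "words q n = {xs. length xs = n \<and> set xs \<subseteq> {1..q}}"

definition hdist :: "nat list \<Rightarrow> nat list \<Rightarrow> nat" where
  "hdist x y = card {i. i < length x \<and> x ! i \<noteq> y ! i}"

definition list_decodable :: "nat \<Rightarrow> nat \<Rightarrow> real \<Rightarrow> nat \<Rightarrow> nat list set \<Rightarrow> bool" where
  "list_decodable q n r L C \<longleftrightarrow>
     (\<forall>y \<in> words q n. card {c \<in> C. real (hdist c y) \<le> r * real n} \<le> L)"

definition min_dist_ge :: "nat list set \<Rightarrow> int \<Rightarrow> bool" where
  "min_dist_ge C d \<longleftrightarrow> (\<forall>x \<in> C. \<forall>y \<in> C. x \<noteq> y \<longrightarrow> int (hdist x y) \<ge> d)"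

end

theory Submission
  imports Defs "HOL-Library.FuncSet"
begin

(* Let t = r n, u = t div L and w = \<epsilon> + 1, so that |C| = q^(m+1) with m = n - (t + u + w).
   Call c \<in> C robust if for every set S of m coordinates more than L codewords agree with c
   on S. For a fixed S, pigeonholing over the q^m patterns on S shows that at most L q^m
   codewords have at most L companions on S; hence at most 2^n L q^m codewords are not robust,
   at most a (1 - \<gamma>)-fraction of C once q \<ge> 2^n L / (1 - \<gamma>).
   Two distinct robust codewords c, c' are at distance more than t + u - (L - 1) w: otherwise
   choose t + u + w coordinates T containing all those where c and c' differ, and L - 1 further
   codewords agreeing with c outside T. Cutting T into L - 1 blocks of length u + w, a stretch
   copying c and a stretch copying c', one builds a word within distance t of all L + 1 of
   them, contradicting list-decodability. *)

lemma finite_words: "finite (words q n)"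
proof -
  have "words q n = {xs. set xs \<subseteq> {1..q} \<and> length xs = n}" by (auto simp: words_def)
  then show ?thesis using finite_lists_length_eq[of "{1..q}" n] by simp
qed

lemma nth_in_alphabet: "x \<in> words q n \<Longrightarrow> i < n \<Longrightarrow> x ! i \<in> {1..q}"
  unfolding words_def using nth_mem by blast

definition agreeing :: "nat list set \<Rightarrow> nat set \<Rightarrow> nat list \<Rightarrow> nat list set" where
  "agreeing C S c = {x\<in>C. \<forall>i\<in>S. x!i = c!i}"

definition robust :: "nat list set \<Rightarrow> nat \<Rightarrow> nat \<Rightarrow> nat \<Rightarrow> nat list \<Rightarrow> bool" where
  "robust C n m L c \<longleftrightarrow> (\<forall>S\<subseteq>{..<n}. card S = m \<longrightarrow> L < card (agreeing C S c))"

lemma card_sparse_agreeing_le: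
  assumes C: "C \<subseteq> words q n" and S: "S \<subseteq> {..<n}"
  shows "card {c\<in>C. card (agreeing C S c) \<le> L} \<le> L * q ^ card S"
proof -
  define A where "A = {c\<in>C. card (agreeing C S c) \<le> L}"
  define f where "f c = restrict (nth c) S" for c :: "nat list"
  have finC: "finite C" using C finite_words finite_subset by blast
  have finS: "finite S" using S finite_subset by blast
  have fibre_le: "card {c\<in>A. f c = v} \<le> L" if "v \<in> f ` A" for v
  proof -
    obtain c0 where c0: "c0 \<in> A" "v = f c0" using \<open>v \<in> f ` A\<close> by blast
    have "{c\<in>A. f c = v} \<subseteq> agreeing C S c0"
      using c0 by (auto simp: A_def agreeing_def f_def restrict_def fun_eq_iff)
    then have "card {c\<in>A. f c = v} \<le> card (agreeing C S c0)"
      using finC by (intro card_mono) (auto simp: agreeing_def)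
    also have "\<dots> \<le> L" using c0 by (simp add: A_def)
    finally show ?thesis .
  qed
  have image_sub: "f ` A \<subseteq> PiE S (\<lambda>_. {1..q})"
  proof
    fix v assume "v \<in> f ` A"
    then obtain c where c: "c \<in> C" "v = f c" by (auto simp: A_def)
    then show "v \<in> PiE S (\<lambda>_. {1..q})"
      using C S nth_in_alphabet by (fastforce simp: f_def)
  qed
  have "A = (\<Union>v\<in>f ` A. {c\<in>A. f c = v})" by blast
  then have "card A \<le> (\<Sum>v\<in>f ` A. card {c\<in>A. f c = v})"
    using card_UN_le[of "f ` A" "\<lambda>v. {c\<in>A. f c = v}"] finC by (simp add: A_def)
  also have "\<dots> \<le> card (f ` A) * L"
    using sum_mono[of "f ` A" _ "\<lambda>_. L"] fibre_le by simp
  also have "card (f ` A) \<le> q ^ card S"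
    using card_mono[OF _ image_sub] finS by (simp add: finite_PiE card_PiE)
  finally show ?thesis unfolding A_def by (simp add: mult.commute)
qed

lemma card_not_robust_le:
  assumes C: "C \<subseteq> words q n"
  shows "card {c\<in>C. \<not> robust C n m L c} \<le> 2 ^ n * (L * q ^ m)"
proof -
  define F where "F = {S. S \<subseteq> {..<n} \<and> card S = m}"
  have finF: "finite F" unfolding F_def by (rule finite_subset[of _ "Pow {..<n}"]) auto
  have "{c\<in>C. \<not> robust C n m L c} = (\<Union>S\<in>F. {c\<in>C. card (agreeing C S c) \<le> L})"
    by (auto simp: robust_def F_def not_less)
  then have "card {c\<in>C. \<not> robust C n m L c} \<le> (\<Sum>S\<in>F. card {c\<in>C. card (agreeing C S c) \<le> L})"
    using card_UN_le[OF finF] by simp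
  also have "\<dots> \<le> (\<Sum>S\<in>F. L * q ^ m)"
    using card_sparse_agreeing_le[OF C] by (intro sum_mono) (auto simp: F_def)
  also have "\<dots> = card F * (L * q ^ m)" by simp
  also have "card F \<le> 2 ^ n"
    using card_mono[of "Pow {..<n}" F] by (auto simp: F_def card_Pow)
  finally show ?thesis by simp
qed

lemma card_disagreements_le:
  assumes "A \<subseteq> {..<N}" and "\<forall>k\<in>A. f k = g k"
  shows "card {k. k < N \<and> f k \<noteq> g k} \<le> N - card A"
proof -
  have "{k. k < N \<and> f k \<noteq> g k} \<subseteq> {..<N} - A" using assms(2) by auto
  then have "card {k. k < N \<and> f k \<noteq> g k} \<le> card ({..<N} - A)" by (intro card_mono) simp_all
  also have "\<dots> = N - card A" using assms(1) by (simp add: card_Diff_subset finite_subset)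
  finally show ?thesis .
qed

lemma block_centre:
  fixes a a' :: "nat \<Rightarrow> 'a" and G :: "nat \<Rightarrow> nat \<Rightarrow> 'a"
  assumes L1: "L \<ge> 1" and Lu: "L * u \<le> t" and wu: "(L - 1) * w \<le> u"
    and b_le: "b + (L - 1) * w \<le> t + u" and agree: "\<forall>k. b \<le> k \<longrightarrow> k < t + u + w \<longrightarrow> a k = a' k"
  obtains Y where "\<forall>k. Y k = a k \<or> Y k = a' k \<or> (\<exists>j<L - 1. Y k = G j k)"
    and "card {k. k < t + u + w \<and> a k \<noteq> Y k} \<le> t"
    and "card {k. k < t + u + w \<and> a' k \<noteq> Y k} \<le> t"
    and "\<forall>j<L - 1. card {k. k < t + u + w \<and> G j k \<noteq> Y k} \<le> t"
proof -
  define e where "e = (L - 1) * (u + w)"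
  define Y where "Y k = (if k < e then G (k div (u + w)) k else if k < t then a k else a' k)" for k
  have e_eq: "e + u = (L - 1) * w + L * u"
    using L1 by (cases L) (simp_all add: e_def algebra_simps)
  then have e_le: "e \<le> t" using Lu wu by linarith
  have be: "b + e \<le> 2 * t" using e_eq b_le Lu by linarith
  show thesis
  proof (rule that)
    show "\<forall>k. Y k = a k \<or> Y k = a' k \<or> (\<exists>j<L - 1. Y k = G j k)"
    proof
      fix k
      have "k div (u + w) < L - 1" if "k < e"
        using that less_mult_imp_div_less[of k "L - 1" "u + w"] by (simp add: e_def)
      then show "Y k = a k \<or> Y k = a' k \<or> (\<exists>j<L - 1. Y k = G j k)"
        unfolding Y_def by (cases "k < e"; cases "k < t") auto
    qed
    have "{k. k < t + u + w \<and> a k \<noteq> Y k} \<subseteq> {..<e} \<union> {t..<b}"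
      using agree by (auto simp: Y_def not_less)
    then have "card {k. k < t + u + w \<and> a k \<noteq> Y k} \<le> card ({..<e} \<union> {t..<b})"
      by (intro card_mono) simp_all
    also have "\<dots> \<le> card {..<e} + card {t..<b}" by (rule card_Un_le)
    also have "\<dots> \<le> t" using be e_le by simp
    finally show "card {k. k < t + u + w \<and> a k \<noteq> Y k} \<le> t" .
    have "\<forall>k\<in>{t..<t + u + w}. a' k = Y k" using e_le by (simp add: Y_def)
    then have "card {k. k < t + u + w \<and> a' k \<noteq> Y k} \<le> t + u + w - card {t..<t + u + w}"
      by (intro card_disagreements_le) auto
    then show "card {k. k < t + u + w \<and> a' k \<noteq> Y k} \<le> t" by simp
    show "\<forall>j<L - 1. card {k. k < t + u + w \<and> G j k \<noteq> Y k} \<le> t"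
    proof (intro allI impI)
      fix j assume j: "j < L - 1"
      define block where "block = {(u + w) * j..<(u + w) * Suc j}"
      have "(u + w) * Suc j \<le> e" using j unfolding e_def by (metis Suc_leI mult.commute mult_le_mono2)
      then have block_sub: "block \<subseteq> {..<t + u + w}" using e_le by (auto simp: block_def)
      have "G j k = Y k" if "k \<in> block" for k
      proof -
        have "k div (u + w) = j" using that by (intro div_nat_eqI) (simp_all add: block_def)
        moreover have "k < e" using that \<open>(u + w) * Suc j \<le> e\<close> by (simp add: block_def)
        ultimately show ?thesis by (simp add: Y_def)
      qed
      then have "card {k. k < t + u + w \<and> G j k \<noteq> Y k} \<le> t + u + w - card block"
        by (intro card_disagreements_le[OF block_sub]) blast
      then show "card {k. k < t + u + w \<and> G j k \<noteq> Y k} \<le> t" by (simp add: block_def)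
    qed
  qed
qed

lemma enumerate_with_prefix:
  fixes T :: "'a::linorder set"
  assumes "finite T" and "B \<subseteq> T"
  obtains \<pi> where "bij_betw \<pi> {..<card T} T" and "\<forall>k<card T. \<pi> k \<in> B \<longleftrightarrow> k < card B"
proof -
  have finB: "finite B" using assms finite_subset by blast
  define ps where "ps = sorted_list_of_set B @ sorted_list_of_set (T - B)"
  have "distinct ps" using finB assms(1) by (auto simp: ps_def)
  moreover have set_ps: "set ps = T" using assms finB by (auto simp: ps_def)
  ultimately have len_ps: "length ps = card T" using distinct_card by fastforce
  show thesis
  proof (rule that)
    show "bij_betw (nth ps) {..<card T} T"
      using \<open>distinct ps\<close> set_ps len_ps by (intro bij_betw_nth) auto
    show "\<forall>k<card T. ps ! k \<in> B \<longleftrightarrow> k < card B"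
    proof (intro allI impI)
      fix k assume "k < card T"
      then have k: "k < card B + card (T - B)" using len_ps by (simp add: ps_def)
      show "ps ! k \<in> B \<longleftrightarrow> k < card B"
      proof (cases "k < card B")
        case True
        then have "ps ! k \<in> set (sorted_list_of_set B)" by (simp add: ps_def nth_append)
        then show ?thesis using True finB by simp
      next
        case False
        then have "ps ! k \<in> set (sorted_list_of_set (T - B))"
          using k by (simp add: ps_def nth_append)
        then show ?thesis using False assms(1) by simp
      qed
    qed
  qed
qed

lemma hdist_reindex:
  assumes "length x = n" and "T \<subseteq> {..<n}" and "\<forall>i<n. i \<notin> T \<longrightarrow> x ! i = y ! i"
    and \<pi>: "bij_betw \<pi> {..<N} T"
  shows "hdist x y = card {k. k < N \<and> x ! (\<pi> k) \<noteq> y ! (\<pi> k)}"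
proof -
  have "{i. i < length x \<and> x ! i \<noteq> y ! i} = \<pi> ` {k. k < N \<and> x ! (\<pi> k) \<noteq> y ! (\<pi> k)}"
    using assms bij_betw_imp_surj_on[OF \<pi>] bij_betwE[OF \<pi>] by auto
  moreover have "inj_on \<pi> {k. k < N \<and> x ! (\<pi> k) \<noteq> y ! (\<pi> k)}"
    using bij_betw_imp_inj_on[OF \<pi>] by (rule inj_on_subset) auto
  ultimately show ?thesis by (simp add: hdist_def card_image)
qed

lemma obtain_patched_word:
  assumes T: "T \<subseteq> {..<n}" and \<pi>: "bij_betw \<pi> {..<N} T"
  obtains y where "length y = n" and "\<forall>k<N. y ! (\<pi> k) = Y k"
    and "\<forall>i<n. i \<notin> T \<longrightarrow> y ! i = c ! i"
proof (rule that)
  define y where "y = map (\<lambda>i. if i \<in> T then Y (the_inv_into {..<N} \<pi> i) else c ! i) [0..<n]"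
  show "length y = n" by (simp add: y_def)
  show "\<forall>k<N. y ! (\<pi> k) = Y k"
    using T bij_betwE[OF \<pi>] the_inv_into_f_f[OF bij_betw_imp_inj_on[OF \<pi>]] by (auto simp: y_def)
  show "\<forall>i<n. i \<notin> T \<longrightarrow> y ! i = c ! i" by (simp add: y_def)
qed

lemma common_centre:
  assumes c: "c \<in> words q n" and c': "c' \<in> words q n" and g: "\<forall>j<L - 1. g j \<in> words q n"
    and T: "T \<subseteq> {..<n}" "card T = t + u + w"
    and outside: "\<forall>i<n. i \<notin> T \<longrightarrow> c' ! i = c ! i \<and> (\<forall>j<L - 1. g j ! i = c ! i)"
    and L1: "L \<ge> 1" and Lu: "L * u \<le> t" and wu: "(L - 1) * w \<le> u"
    and d: "hdist c c' + (L - 1) * w \<le> t + u"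
  obtains y where "y \<in> words q n" and "hdist c y \<le> t" and "hdist c' y \<le> t"
    and "\<forall>j<L - 1. hdist (g j) y \<le> t"
proof -
  define B where "B = {i. i < n \<and> c ! i \<noteq> c' ! i}"
  have len: "length c = n" "length c' = n" "\<forall>j<L - 1. length (g j) = n"
    using c c' g by (auto simp: words_def)
  have "B \<subseteq> T" using outside by (auto simp: B_def)
  moreover have "finite T" using T(1) finite_subset by blast
  ultimately obtain \<pi> where \<pi>: "bij_betw \<pi> {..<t + u + w} T"
    and prefix: "\<forall>k<t + u + w. \<pi> k \<in> B \<longleftrightarrow> k < card B"
    using enumerate_with_prefix T(2) by metis
  have \<pi>_n: "\<pi> k < n" if "k < t + u + w" for k using bij_betwE[OF \<pi>] T(1) that by blast
  have "card B = hdist c c'" using len by (simp add: B_def hdist_def)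
  then have "\<forall>k. hdist c c' \<le> k \<longrightarrow> k < t + u + w \<longrightarrow> c ! (\<pi> k) = c' ! (\<pi> k)"
    using prefix \<pi>_n by (auto simp: B_def)
  then obtain Y
    where Y_range: "\<forall>k. Y k = c ! (\<pi> k) \<or> Y k = c' ! (\<pi> k) \<or> (\<exists>j<L - 1. Y k = g j ! (\<pi> k))"
      and Y_c: "card {k. k < t + u + w \<and> c ! (\<pi> k) \<noteq> Y k} \<le> t"
      and Y_c': "card {k. k < t + u + w \<and> c' ! (\<pi> k) \<noteq> Y k} \<le> t"
      and Y_g: "\<forall>j<L - 1. card {k. k < t + u + w \<and> g j ! (\<pi> k) \<noteq> Y k} \<le> t"
    by (rule block_centre[OF L1 Lu wu d])
  obtain y where len_y: "length y = n" and y_\<pi>: "\<forall>k<t + u + w. y ! (\<pi> k) = Y k"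
    and y_out: "\<forall>i<n. i \<notin> T \<longrightarrow> y ! i = c ! i"
    by (rule obtain_patched_word[OF T(1) \<pi>])
  have dist_y: "hdist x y = card {k. k < t + u + w \<and> x ! (\<pi> k) \<noteq> Y k}"
    if "length x = n" "\<forall>i<n. i \<notin> T \<longrightarrow> x ! i = c ! i" for x
  proof -
    have "hdist x y = card {k. k < t + u + w \<and> x ! (\<pi> k) \<noteq> y ! (\<pi> k)}"
      using hdist_reindex[OF that(1) T(1) _ \<pi>] that(2) y_out by simp
    also have "{k. k < t + u + w \<and> x ! (\<pi> k) \<noteq> y ! (\<pi> k)} = {k. k < t + u + w \<and> x ! (\<pi> k) \<noteq> Y k}"
      using y_\<pi> by (intro Collect_cong) auto
    finally show ?thesis .
  qed
  show thesis
  proof (rule that)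
    have "y ! i \<in> {1..q}" if "i < n" for i
    proof (cases "i \<in> T")
      case True
      then obtain k where "k < t + u + w" "i = \<pi> k" using bij_betw_imp_surj_on[OF \<pi>] by blast
      then show ?thesis using y_\<pi> Y_range \<pi>_n c c' g nth_in_alphabet by metis
    next
      case False
      then show ?thesis using that y_out c nth_in_alphabet by metis
    qed
    then show "y \<in> words q n" using len_y by (auto simp: words_def in_set_conv_nth)
    show "hdist c y \<le> t" using dist_y len Y_c by simp
    show "hdist c' y \<le> t" using dist_y len Y_c' outside by simp
    show "\<forall>j<L - 1. hdist (g j) y \<le> t" using dist_y len Y_g outside by simp
  qed
qed

lemma obtain_superset_with_card:
  assumes "finite U" and "B \<subseteq> U" and "card B \<le> k" and "k \<le> card U"
  obtains T where "B \<subseteq> T" and "T \<subseteq> U" and "card T = k"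
proof -
  have "finite B" using assms finite_subset by blast
  have "k - card B \<le> card (U - B)" using assms by (simp add: card_Diff_subset \<open>finite B\<close>)
  then obtain X where X: "X \<subseteq> U - B" "card X = k - card B" "finite X"
    by (rule obtain_subset_with_card_n)
  have "card (B \<union> X) = k"
    using X assms \<open>finite B\<close> by (subst card_Un_disjoint) auto
  then show thesis using that[of "B \<union> X"] X assms by blast
qed

lemma robust_obtain_companions:
  assumes "finite C" and rob: "robust C n (n - card T) L c" and T: "T \<subseteq> {..<n}"
    and "c \<in> C" and "c' \<in> C" and "c \<noteq> c'" and c'_out: "\<forall>i<n. i \<notin> T \<longrightarrow> c' ! i = c ! i"
  obtains X where "X \<subseteq> C - {c, c'}" and "card X = L - 1"
    and "\<forall>x\<in>X. \<forall>i<n. i \<notin> T \<longrightarrow> x ! i = c ! i"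
proof -
  define S where "S = {..<n} - T"
  have "card S = n - card T" using T by (simp add: S_def card_Diff_subset finite_subset)
  then have big: "L < card (agreeing C S c)" using rob by (simp add: robust_def S_def)
  have "c \<in> agreeing C S c" "c' \<in> agreeing C S c"
    using assms by (auto simp: agreeing_def S_def)
  then have "card (agreeing C S c - {c, c'}) = card (agreeing C S c) - 2"
    using \<open>c \<noteq> c'\<close> by (simp add: card_Diff_subset)
  then have "L - 1 \<le> card (agreeing C S c - {c, c'})" using big by linarith
  then obtain X where X: "X \<subseteq> agreeing C S c - {c, c'}" "card X = L - 1"
    by (rule obtain_subset_with_card_n)
  then show thesis using that[of X] by (auto simp: agreeing_def S_def)
qed

lemma robust_codewords_far_apart:
  assumes C: "C \<subseteq> words q n" and ball: "\<forall>y\<in>words q n. card {x\<in>C. hdist x y \<le> t} \<le> L"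
    and L1: "L \<ge> 1" and Lu: "L * u \<le> t" and wu: "(L - 1) * w \<le> u" and n: "t + u + w \<le> n"
    and rob: "robust C n (n - (t + u + w)) L c" and cC: "c \<in> C" and c'C: "c' \<in> C" and "c \<noteq> c'"
  shows "t + u < hdist c c' + (L - 1) * w"
proof (rule ccontr)
  assume "\<not> ?thesis"
  then have d: "hdist c c' + (L - 1) * w \<le> t + u" by simp
  have finC: "finite C" using C finite_words finite_subset by blast
  define B where "B = {i. i < n \<and> c ! i \<noteq> c' ! i}"
  have "card B = hdist c c'" using C cC by (auto simp: B_def hdist_def words_def)
  then obtain T where BT: "B \<subseteq> T" and T: "T \<subseteq> {..<n}" "card T = t + u + w"
    using obtain_superset_with_card[of "{..<n}" B "t + u + w"] d n by (auto simp: B_def)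
  have c'_out: "\<forall>i<n. i \<notin> T \<longrightarrow> c' ! i = c ! i" using BT by (auto simp: B_def)
  have rob_T: "robust C n (n - card T) L c" using rob T(2) by simp
  obtain X where X: "X \<subseteq> C - {c, c'}" "card X = L - 1"
    and X_out: "\<forall>x\<in>X. \<forall>i<n. i \<notin> T \<longrightarrow> x ! i = c ! i"
    by (rule robust_obtain_companions[OF finC rob_T T(1) cC c'C \<open>c \<noteq> c'\<close> c'_out])
  have "finite X" using X(1) finC finite_subset by blast
  have "c \<notin> X" "c' \<notin> X" using X(1) by auto
  obtain g where g: "bij_betw g {..<L - 1} X"
    using ex_bij_betw_nat_finite[OF \<open>finite X\<close>] X(2) by (auto simp: atLeast0LessThan)
  have gX: "\<forall>j<L - 1. g j \<in> X" using bij_betwE[OF g] by blast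
  have cW: "c \<in> words q n" and c'W: "c' \<in> words q n" using C cC c'C by blast+
  have gW: "\<forall>j<L - 1. g j \<in> words q n" using gX X(1) C by blast
  have out: "\<forall>i<n. i \<notin> T \<longrightarrow> c' ! i = c ! i \<and> (\<forall>j<L - 1. g j ! i = c ! i)"
    using c'_out X_out gX by blast
  obtain y where y: "y \<in> words q n" and close: "hdist c y \<le> t" "hdist c' y \<le> t"
    "\<forall>j<L - 1. hdist (g j) y \<le> t"
    by (rule common_centre[OF cW c'W gW T out L1 Lu wu d])
  have "\<forall>x\<in>X. hdist x y \<le> t" using close(3) bij_betw_imp_surj_on[OF g] by blast
  define Z where "Z = insert c (insert c' X)"
  have "Z \<subseteq> {x\<in>C. hdist x y \<le> t}"
    using \<open>\<forall>x\<in>X. hdist x y \<le> t\<close> close(1,2) cC c'C X(1) by (auto simp: Z_def)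
  then have "card Z \<le> card {x\<in>C. hdist x y \<le> t}" using finC by (intro card_mono) simp_all
  also have "\<dots> \<le> L" using ball y by blast
  finally have "card Z \<le> L" .
  moreover have "card Z = L + 1"
    using X(2) \<open>finite X\<close> \<open>c \<notin> X\<close> \<open>c' \<notin> X\<close> \<open>c \<noteq> c'\<close> L1 by (simp add: Z_def)
  ultimately show False by simp
qed

lemma robust_subcode:
  fixes \<gamma> :: real
  assumes C: "C \<subseteq> words q n" and ball: "\<forall>y\<in>words q n. card {x\<in>C. hdist x y \<le> t} \<le> L"
    and L1: "L \<ge> 1" and Lu: "L * u \<le> t" and wu: "(L - 1) * w \<le> u" and n: "t + u + w + m = n"
    and card_C: "card C = q ^ Suc m" and q: "2 ^ n * real L \<le> (1 - \<gamma>) * real q"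
  shows "\<exists>C'\<subseteq>C. \<gamma> * real (card C) \<le> real (card C') \<and>
           min_dist_ge C' (int (t + u) - int ((L - 1) * w) + 1)"
proof (intro exI conjI)
  define C' where "C' = {c\<in>C. robust C n m L c}"
  have m: "m = n - (t + u + w)" using n by simp
  show "C' \<subseteq> C" by (auto simp: C'_def)
  have "finite C" using C finite_words finite_subset by blast
  then have "card C = card C' + card {c\<in>C. \<not> robust C n m L c}"
    unfolding C'_def by (subst card_Un_disjoint[symmetric]) (auto intro: arg_cong[where f = card])
  moreover have "real (card {c\<in>C. \<not> robust C n m L c}) \<le> 2 ^ n * (real L * real q ^ m)"
    using card_not_robust_le[OF C, of m L] of_nat_mono by fastforce
  ultimately have "real (card C) \<le> real (card C') + 2 ^ n * (real L * real q ^ m)" by simp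
  moreover have "\<gamma> * real (card C) + 2 ^ n * (real L * real q ^ m) \<le> real (card C)"
    using mult_right_mono[OF q, of "real q ^ m"] card_C by (simp add: algebra_simps)
  ultimately show "\<gamma> * real (card C) \<le> real (card C')" by linarith
  show "min_dist_ge C' (int (t + u) - int ((L - 1) * w) + 1)"
    unfolding min_dist_ge_def
  proof (intro ballI impI)
    fix x y assume "x \<in> C'" "y \<in> C'" "x \<noteq> y"
    then have "t + u < hdist x y + (L - 1) * w"
      using robust_codewords_far_apart[OF C ball L1 Lu wu] n by (auto simp: C'_def m)
    then show "int (t + u) - int ((L - 1) * w) + 1 \<le> int (hdist x y)" by linarith
  qed
qed

lemma of_nat_eq_powi_cases:
  assumes "2 \<le> q" and N: "real N = real q powi k"
  obtains "k = 0" and "N = 1" | m where "k = int (Suc m)" and "N = q ^ Suc m"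
proof -
  have "0 \<le> k"
  proof (rule ccontr)
    assume "\<not> 0 \<le> k"
    then have "real N = inverse (real q ^ nat (- k))" using N by (simp add: power_int_def power_inverse)
    moreover have "1 < real q ^ nat (- k)"
      using assms(1) \<open>\<not> 0 \<le> k\<close> by (intro one_less_power) auto
    ultimately have "real N < 1" "real N \<noteq> 0" using assms(1) by (simp_all add: inverse_less_1_iff)
    then show False by simp
  qed
  show thesis
  proof (cases "k = 0")
    case True
    then show thesis using that(1) N by simp
  next
    case False
    then have k: "k = int (Suc (nat k - 1))" using \<open>0 \<le> k\<close> by simp
    then have "real N = real (q ^ Suc (nat k - 1))"
      using N by (metis of_nat_power power_int_of_nat)
    then show thesis using that(2) k by (simp only: of_nat_eq_iff)
  qed
qed

lemma distant_subcode:
  fixes \<gamma> :: real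
  assumes C: "C \<subseteq> words q n" and ball: "\<forall>y\<in>words q n. card {x\<in>C. hdist x y \<le> t} \<le> L"
    and L1: "L \<ge> 1" and Lu: "L * u \<le> t" and wu: "(L - 1) * w \<le> u"
    and q2: "2 \<le> q" and q: "2 ^ n * real L \<le> (1 - \<gamma>) * real q"
    and card_C: "real (card C) = real q powi (int n - int (t + u + w) + 1)"
  shows "\<exists>C'\<subseteq>C. \<gamma> * real (card C) \<le> real (card C') \<and>
           min_dist_ge C' (int (t + u) - int ((L - 1) * w) + 1)"
  using q2 card_C
proof (cases rule: of_nat_eq_powi_cases)
  case 1
  have "0 < 2 ^ n * real L" using L1 by simp
  then have "\<gamma> < 1" using q by (smt (verit) mult_nonpos_nonneg of_nat_0_le_iff)
  obtain c where "C = {c}" using \<open>card C = 1\<close> by (auto simp: card_1_singleton_iff)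
  then show ?thesis using \<open>\<gamma> < 1\<close> by (intro exI[of _ C]) (auto simp: min_dist_ge_def)
next
  case (2 m)
  then have "t + u + w + m = n" by linarith
  then show ?thesis using robust_subcode[OF C ball L1 Lu wu _ _ q] \<open>card C = q ^ Suc m\<close> by blast
qed

lemma floor_mult_succ_div:
  assumes "L \<ge> 1"
  shows "\<lfloor>real (L + 1) / real L * real t\<rfloor> = int (t + t div L)"
proof -
  have "real (L + 1) / real L * real t = real t / real L + of_int (int t)"
    using assms by (simp add: field_simps)
  then show ?thesis by (simp add: floor_divide_of_nat_eq)
qed

theorem theorem6p1:
  fixes L n :: nat and \<gamma> r :: real
  assumes "L \<ge> 1" and "0 < \<gamma>" and "\<gamma> < 1"
    and "0 \<le> r" and "r < real L / real (L + 1)"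
    and "r * real n \<in> \<nat>"
  shows "\<exists>q0::nat. \<forall>q \<ge> q0. \<forall>(\<epsilon>::nat) (C::nat list set).
           int ((L - 1) * (\<epsilon> + 1)) \<le> \<lfloor>r * real n / real L\<rfloor>
           \<longrightarrow> C \<subseteq> words q n
           \<longrightarrow> list_decodable q n r L C
           \<longrightarrow> real (card C) = real q powi (int n - \<lfloor>real (L + 1) / real L * (r * real n)\<rfloor> - int \<epsilon>)
           \<longrightarrow> (\<exists>C' \<subseteq> C. real (card C') \<ge> \<gamma> * real (card C) \<and>
                  min_dist_ge C' (\<lfloor>real (L + 1) / real L * (r * real n)\<rfloor> - int ((L - 1) * (\<epsilon> + 1)) + 1))"
proof -
  obtain t where t: "r * real n = real t" using assms(6) by (metis Nats_cases)
  define u where "u = t div L"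
  have floor_d: "\<lfloor>real (L + 1) / real L * (r * real n)\<rfloor> = int (t + u)"
    using floor_mult_succ_div[OF assms(1)] by (simp add: t u_def)
  have floor_u: "\<lfloor>r * real n / real L\<rfloor> = int u" by (simp add: t u_def floor_divide_of_nat_eq)
  have Lu: "L * u \<le> t" by (simp add: u_def)
  define q0 where "q0 = nat \<lceil>2 ^ n * real L / (1 - \<gamma>)\<rceil> + 2"
  show ?thesis
  proof (intro exI[of _ q0] allI impI)
    fix q \<epsilon> and C :: "nat list set"
    assume q: "q0 \<le> q" and wu_floor: "int ((L - 1) * (\<epsilon> + 1)) \<le> \<lfloor>r * real n / real L\<rfloor>"
      and C: "C \<subseteq> words q n" and ld: "list_decodable q n r L C"
      and card_C: "real (card C) = real q powi (int n - \<lfloor>real (L + 1) / real L * (r * real n)\<rfloor> - int \<epsilon>)"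
    have wu: "(L - 1) * (\<epsilon> + 1) \<le> u" using wu_floor unfolding floor_u of_nat_le_iff .
    have "2 ^ n * real L / (1 - \<gamma>) \<le> real q"
      using q real_nat_ceiling_ge[of "2 ^ n * real L / (1 - \<gamma>)"] by (simp add: q0_def)
    then have q_big: "2 ^ n * real L \<le> (1 - \<gamma>) * real q"
      using assms(3) by (simp add: pos_divide_le_eq mult.commute)
    have q2: "2 \<le> q" using q by (simp add: q0_def)
    have ball: "\<forall>y\<in>words q n. card {x\<in>C. hdist x y \<le> t} \<le> L"
      using ld by (simp add: list_decodable_def t)
    have "int n - int (t + u) - int \<epsilon> = int n - int (t + u + (\<epsilon> + 1)) + 1" by simp
    then have "real (card C) = real q powi (int n - int (t + u + (\<epsilon> + 1)) + 1)"
      using card_C unfolding floor_d by (simp only:)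
    from distant_subcode[OF C ball assms(1) Lu wu q2 q_big this]
    show "\<exists>C' \<subseteq> C. \<gamma> * real (card C) \<le> real (card C') \<and>
            min_dist_ge C' (\<lfloor>real (L + 1) / real L * (r * real n)\<rfloor> - int ((L - 1) * (\<epsilon> + 1)) + 1)"
      unfolding floor_d .
  qed
qed

end
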